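(* Let $(\mathcal{F},\langle\cdot,\cdot\rangle_\Xi)$ be a real inner product space (e.g. a finite-dimensional space of functions on $\Xi$) with norm $\|\cdot\|_\Xi$. Let $a,f\in\mathcal{F}$ and $\delta\ge 0$ with $\|f-a\|_\Xi\le\delta$, and let $\mathcal{S}(a,\delta)=\{u\in\mathcal{F}:\|u-a\|_\Xi\le\delta\}$. Let $g\in\mathcal{F}$ and let $h$ be the metric projection of $g$ onto $\mathcal{S}(a,\delta)$, i.e. $h\in\arg\min_{u\in\mathcal{S}(a,\delta)}\|u-g\|_\Xi$. Then $\|f-h\|_\Xi\le\|f-g\|_\Xi$. Moreover, if $g\notin\mathcal{S}(a,\delta)$, then $\|f-h\|_\Xi<\|f-g\|_\Xi$ and, with $\Delta:=\|g-h\|_\Xi$, $$\Delta\sqrt{\frac{\Delta}{\delta+\Delta}}\;\le\;\|f-g\|_\Xi-\|f-h\|_\Xi\;\le\;\Delta.$$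
   Context: Here $f$ is the (unknown) target function, $a$ an anchor function with certified tolerance $\delta$, and $g$ an arbitrary approximation of $f$. *)

theory Defs
  imports "HOL-Analysis.Analysis"
begin

definition tolerance_ball :: "'a::real_inner \<Rightarrow> real \<Rightarrow> 'a set" where
  "tolerance_ball a \<delta> = {u. norm (u - a) \<le> \<delta>}"

definition is_metric_projection :: "'a::real_inner \<Rightarrow> 'a set \<Rightarrow> 'a \<Rightarrow> bool" where
  "is_metric_projection g S h \<longleftrightarrow> h \<in> S \<and> (\<forall>u\<in>S. norm (h - g) \<le> norm (u - g))"

end

theory Submission
  imports Defs
begin

text \<open>Outside the ball, the metric projection is the radial one, \<open>h = a + \<delta> u\<close> with
  \<open>u\<close> the unit vector from \<open>a\<close> towards \<open>g = a + r u\<close>, so \<open>\<Delta> = r - \<delta>\<close>. Writing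
  \<open>p = \<langle>f - a, u\<rangle> \<le> \<delta>\<close>, expanding the squared distances from \<open>f\<close> to the points
  \<open>a + s u\<close> of the ray gives \<open>\<parallel>f - g\<parallel>\<^sup>2 = \<parallel>f - h\<parallel>\<^sup>2 + \<Delta> (\<Delta> + t)\<close> with
  \<open>t = 2 (\<delta> - p) \<ge> 0\<close>, together with \<open>\<parallel>f - h\<parallel>\<^sup>2 \<le> \<delta> t\<close>. The quantitative bound is then
  a statement about real numbers, proved by AM-GM.\<close>

lemma metric_projection_self:
  assumes "is_metric_projection g S h" and "g \<in> S"
  shows "h = g"
  using assms unfolding is_metric_projection_def by fastforce

lemma metric_projection_tolerance_ball_outside:
  fixes a g h :: "'a::real_inner"
  assumes "\<delta> \<ge> 0" and "norm (g - a) > \<delta>"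
    and proj: "is_metric_projection g (tolerance_ball a \<delta>) h"
  shows "h = a + \<delta> *\<^sub>R sgn (g - a)"
proof -
  define r where "r = norm (g - a)"
  have r: "r > \<delta>" "r > 0" using assms by (auto simp: r_def)
  have h_in: "norm (h - a) \<le> \<delta>"
    and h_min: "\<And>u. norm (u - a) \<le> \<delta> \<Longrightarrow> norm (h - g) \<le> norm (u - g)"
    using proj unfolding is_metric_projection_def tolerance_ball_def by auto
  have "norm (h - g) \<le> norm ((a + \<delta> *\<^sub>R sgn (g - a)) - g)"
    using r \<open>\<delta> \<ge> 0\<close> by (intro h_min) (simp add: norm_sgn r_def)
  also have "(a + \<delta> *\<^sub>R sgn (g - a)) - g = (\<delta> - r) *\<^sub>R sgn (g - a)"
    using r by (simp add: sgn_div_norm r_def algebra_simps)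
  also have "norm \<dots> = r - \<delta>"
    using r by (simp add: norm_sgn r_def)
  finally have "norm (g - h) \<le> r - \<delta>" by (simp add: norm_minus_commute)
  moreover have "r \<le> norm (g - h) + norm (h - a)"
    using norm_triangle_ineq[of "g - h" "h - a"] by (simp add: r_def)
  ultimately have "norm (g - h) = r - \<delta>" "norm (h - a) = \<delta>"
    using h_in by linarith+
  moreover have "norm ((g - h) + (h - a)) = r" by (simp add: r_def)
  \<comment> \<open>equality in the triangle inequality puts \<open>h\<close> on the segment from \<open>a\<close> to \<open>g\<close>\<close>
  ultimately have "(r - \<delta>) *\<^sub>R (h - a) = \<delta> *\<^sub>R (g - h)"
    using norm_triangle_eq[of "g - h" "h - a"] by simp
  then have radial: "r *\<^sub>R (h - a) = \<delta> *\<^sub>R (g - a)"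
    by (simp add: algebra_simps)
  have "h - a = inverse r *\<^sub>R (r *\<^sub>R (h - a))" using r by simp
  also have "\<dots> = \<delta> *\<^sub>R sgn (g - a)"
    using radial by (simp add: sgn_div_norm flip: r_def)
  finally show ?thesis by (simp add: algebra_simps)
qed

lemma norm_diff_scaleR_unit_squared:
  fixes z u :: "'a::real_inner"
  assumes "norm u = 1"
  shows "(norm (z - s *\<^sub>R u))\<^sup>2 = (norm z)\<^sup>2 - 2 * s * (z \<bullet> u) + s\<^sup>2"
proof -
  have "u \<bullet> u = 1" using assms by (simp add: dot_square_norm)
  then show ?thesis
    unfolding power2_norm_eq_inner
    by (simp add: inner_diff_left inner_diff_right inner_commute power2_eq_square)
qed

lemma ray_distance_squared_increment:
  fixes z u :: "'a::real_inner"
  assumes "norm u = 1" and "norm z \<le> \<delta>"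
  obtains t where "t \<ge> 0"
    and "(norm (z - s *\<^sub>R u))\<^sup>2 = (norm (z - \<delta> *\<^sub>R u))\<^sup>2 + (s - \<delta>) * ((s - \<delta>) + t)"
    and "(norm (z - \<delta> *\<^sub>R u))\<^sup>2 \<le> \<delta> * t"
proof
  have "z \<bullet> u \<le> norm z * norm u" by (rule norm_cauchy_schwarz)
  then show "2 * (\<delta> - z \<bullet> u) \<ge> 0" using assms by simp
  show "(norm (z - s *\<^sub>R u))\<^sup>2
      = (norm (z - \<delta> *\<^sub>R u))\<^sup>2 + (s - \<delta>) * ((s - \<delta>) + 2 * (\<delta> - z \<bullet> u))"
    unfolding norm_diff_scaleR_unit_squared[OF assms(1)]
    by (simp add: power2_eq_square algebra_simps)
  have "(norm z)\<^sup>2 \<le> \<delta>\<^sup>2" using assms(2) by (simp add: power_mono)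
  then show "(norm (z - \<delta> *\<^sub>R u))\<^sup>2 \<le> \<delta> * (2 * (\<delta> - z \<bullet> u))"
    unfolding norm_diff_scaleR_unit_squared[OF assms(1)]
    by (simp add: power2_eq_square algebra_simps)
qed

lemma sqrt_ratio_le_diff_of_square_gap:
  fixes A B D d t :: real
  assumes D: "D > 0" and d: "d \<ge> 0" and t: "t \<ge> 0" and A: "A \<ge> 0"
    and gap: "A\<^sup>2 = B\<^sup>2 + D * (D + t)" and B: "B\<^sup>2 \<le> d * t"
  shows "D * sqrt (D / (d + D)) \<le> A - B"
proof -
  define x where "x = D * d / (d + D)"
  define m where "m = D * sqrt (D / (d + D))"
  have x: "x \<ge> 0" using D d by (simp add: x_def)
  have m_sq: "m\<^sup>2 = D\<^sup>2 * (D / (d + D))"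
    using D d by (simp add: m_def power_mult_distrib)
  also have "\<dots> = D\<^sup>2 - D * x"
    using D d by (simp add: x_def field_simps power2_eq_square)
  finally have m_sq': "m\<^sup>2 = D\<^sup>2 - D * x" .
  have "2 * B * m \<le> D * (x + t)"
  proof (rule power2_le_imp_le)
    have "(2 * B * m)\<^sup>2 \<le> 4 * (d * t) * m\<^sup>2"
      using B by (simp add: power_mult_distrib mult_right_mono)
    also have "\<dots> = D\<^sup>2 * (4 * t * x)"
      unfolding m_sq x_def using D d by (simp add: field_simps power2_eq_square)
    also have "\<dots> \<le> D\<^sup>2 * (x + t)\<^sup>2"
      \<comment> \<open>AM-GM: \<open>4 t x \<le> (x + t)\<^sup>2\<close>\<close>
      using sum_squares_ge_zero[of "x - t" 0]
      by (intro mult_left_mono) (simp_all add: power2_eq_square algebra_simps)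
    finally show "(2 * B * m)\<^sup>2 \<le> (D * (x + t))\<^sup>2" by (simp add: power_mult_distrib)
    show "0 \<le> D * (x + t)" using D x t by simp
  qed
  then have "(B + m)\<^sup>2 \<le> A\<^sup>2"
    using gap m_sq' by (simp add: power2_eq_square algebra_simps)
  then have "B + m \<le> A" using A by (rule power2_le_imp_le)
  then show ?thesis by (simp add: m_def)
qed

lemma metric_projection_tolerance_ball_gap:
  fixes a f g h :: "'a::real_inner"
  assumes "\<delta> \<ge> 0" and "norm (f - a) \<le> \<delta>"
    and "is_metric_projection g (tolerance_ball a \<delta>) h" and "g \<notin> tolerance_ball a \<delta>"
  obtains t where "t \<ge> 0" and "norm (g - h) > 0"
    and "(norm (f - g))\<^sup>2 = (norm (f - h))\<^sup>2 + norm (g - h) * (norm (g - h) + t)"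
    and "(norm (f - h))\<^sup>2 \<le> \<delta> * t"
proof -
  define r u where "r = norm (g - a)" and "u = sgn (g - a)"
  have r: "r > \<delta>" "r > 0" using assms(1,4) by (auto simp: tolerance_ball_def r_def)
  have u: "norm u = 1" using r by (auto simp: u_def r_def norm_sgn)
  have h: "h = a + \<delta> *\<^sub>R u"
    using metric_projection_tolerance_ball_outside assms(1,3) r by (simp add: u_def r_def)
  have g: "g = a + r *\<^sub>R u" using r by (simp add: u_def sgn_div_norm flip: r_def)
  have \<Delta>: "norm (g - h) = r - \<delta>"
    using r u by (simp add: g h algebra_simps flip: scaleR_diff_left)
  have fg: "f - g = (f - a) - r *\<^sub>R u" and fh: "f - h = (f - a) - \<delta> *\<^sub>R u"
    by (simp_all add: g h)
  obtain t where "t \<ge> 0"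
    and "(norm ((f - a) - r *\<^sub>R u))\<^sup>2
      = (norm ((f - a) - \<delta> *\<^sub>R u))\<^sup>2 + (r - \<delta>) * ((r - \<delta>) + t)"
    and "(norm ((f - a) - \<delta> *\<^sub>R u))\<^sup>2 \<le> \<delta> * t"
    by (rule ray_distance_squared_increment[OF u assms(2)])
  then show ?thesis
    using that r(1) unfolding \<Delta> fg fh by simp
qed

theorem mainTheorem3:
  fixes a f g h :: "'a::real_inner" and \<delta> :: real
  assumes "\<delta> \<ge> 0"
    and "norm (f - a) \<le> \<delta>"
    and "is_metric_projection g (tolerance_ball a \<delta>) h"
  shows "norm (f - h) \<le> norm (f - g) \<and>
         (g \<notin> tolerance_ball a \<delta> \<longrightarrow>
           norm (f - h) < norm (f - g) \<and>
           (let \<Delta> = norm (g - h) in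
              \<Delta> * sqrt (\<Delta> / (\<delta> + \<Delta>)) \<le> norm (f - g) - norm (f - h) \<and>
              norm (f - g) - norm (f - h) \<le> \<Delta>))"
proof (cases "g \<in> tolerance_ball a \<delta>")
  case True
  then show ?thesis using metric_projection_self assms(3) by blast
next
  case False
  then obtain t where t: "t \<ge> 0" and \<Delta>: "norm (g - h) > 0"
    and gap: "(norm (f - g))\<^sup>2 = (norm (f - h))\<^sup>2 + norm (g - h) * (norm (g - h) + t)"
    and bound: "(norm (f - h))\<^sup>2 \<le> \<delta> * t"
    using metric_projection_tolerance_ball_gap assms by blast
  have lower: "norm (g - h) * sqrt (norm (g - h) / (\<delta> + norm (g - h)))
      \<le> norm (f - g) - norm (f - h)"
    using \<Delta> assms(1) t gap bound by (intro sqrt_ratio_le_diff_of_square_gap) auto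
  have "(norm (f - h))\<^sup>2 < (norm (f - g))\<^sup>2"
    using \<Delta> t gap by (simp add: add_pos_nonneg)
  then have closer: "norm (f - h) < norm (f - g)"
    by (simp add: power_less_imp_less_base)
  have "norm (f - g) \<le> norm (f - h) + norm (g - h)"
    using norm_triangle_ineq[of "f - h" "h - g"] by (simp add: norm_minus_commute)
  then show ?thesis
    using False closer lower by simp
qed

end
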